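(* Let $\mathbb{X}=\ell_\infty^3$ and let $\mathbb{Y}$ be a two-dimensional polygonal Banach space. Let $T\in\mathbb{L}(\mathbb{X},\mathbb{Y})$ with $\|T\|=1$. Then $T$ is an extreme contraction if and only if $|M_T\cap\operatorname{Ext}(B_{\mathbb{X}})|\geq 6$ and $T(M_T\cap\operatorname{Ext}(B_{\mathbb{X}}))\subseteq\operatorname{Ext}(B_{\mathbb{Y}})$.
   Context: $\mathbb{L}(\mathbb{X},\mathbb{Y})$ is the space of linear operators with the operator norm. $B_{\mathbb{X}}$ denotes the closed unit ball and $\operatorname{Ext}(\cdot)$ the set of its extreme points; $M_T=\{x\in\mathbb{X}:\|x\|=1,\ \|Tx\|=\|T\|\}$. A two-dimensional Banach space is polygonal if its unit ball has only finitely many extreme points. $T$ is an extreme contraction if it is an extreme point of the unit ball of $\mathbb{L}(\mathbb{X},\mathbb{Y})$. *)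

theory Defs
  imports "HOL-Analysis.Analysis"
begin

text \<open>X = l_infinity^3 is modelled as real^3 with the library sup-norm infnorm.
  Y, a two-dimensional real Banach space, is modelled (up to isometry) as real^2
  equipped with an arbitrary norm N.  Linear operators X -> Y are 3-column,
  2-row real matrices acting by matrix-vector multiplication.\<close>

definition is_norm :: "('a::real_vector \<Rightarrow> real) \<Rightarrow> bool" where
  "is_norm N \<longleftrightarrow>
     (\<forall>x. N x = 0 \<longleftrightarrow> x = 0) \<and>
     (\<forall>c x. N (c *\<^sub>R x) = \<bar>c\<bar> * N x) \<and>
     (\<forall>x y. N (x + y) \<le> N x + N y)"

definition unit_ball :: "('a::real_vector \<Rightarrow> real) \<Rightarrow> 'a set" where
  "unit_ball N = {x. N x \<le> 1}"

definition Ext :: "'a::real_vector set \<Rightarrow> 'a set" where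
  "Ext S = {x. x extreme_point_of S}"

definition polygonal :: "(real^2 \<Rightarrow> real) \<Rightarrow> bool" where
  "polygonal N \<longleftrightarrow> finite (Ext (unit_ball N))"

definition op_norm :: "(real^2 \<Rightarrow> real) \<Rightarrow> real^3^2 \<Rightarrow> real" where
  "op_norm N A = Sup {N (A *v x) | x. infnorm x \<le> 1}"

definition norm_attaining :: "(real^2 \<Rightarrow> real) \<Rightarrow> real^3^2 \<Rightarrow> (real^3) set" where
  "norm_attaining N A = {x. infnorm x = 1 \<and> N (A *v x) = op_norm N A}"

definition extreme_contraction :: "(real^2 \<Rightarrow> real) \<Rightarrow> real^3^2 \<Rightarrow> bool" where
  "extreme_contraction N A \<longleftrightarrow> A extreme_point_of {B. op_norm N B \<le> 1}"

end

theory Submission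
  imports Defs
begin

(* By Krein-Milman, T is a contraction iff N (T v) <= 1 at the eight vertices v of the cube, and
   the norm-attaining vertices come in antipodal pairs; there are at least six of them iff they
   span R^3.  If they span R^3 and are mapped to extreme points, then T = (1 - u) A + u B with
   contractions A, B forces A v = B v on a spanning set, so T is extreme.
   Conversely, T + D and T - D stay contractions for a small rank-one perturbation
   D x = (w . x) y as soon as every vertex v satisfies w . v = 0, or N (T v) < 1, or
   T v +- y lie in the unit ball.  If the attaining vertices lie in a plane, take w normal to it.
   If T v is not extreme, take y along a segment through T v; then two antipodal pairs are
   movable and w can be taken normal to the other two, unless all eight vertices attain the norm.
   In that case a kernel vector of T without zero coordinates would give a non-attaining vertex,
   a zero column makes a second pair movable, and two parallel columns yield a perturbation
   directly. *)

section \<open>Norms and their unit balls\<close>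

lemma not_extreme_point_imp_pm:
  assumes "convex S" "x \<in> S" "\<not> x extreme_point_of S"
  obtains y where "y \<noteq> 0" "{x - y, x + y} \<subseteq> S"
proof -
  obtain a b where ab: "a \<in> S" "b \<in> S" "x \<in> open_segment a b"
    using assms(2,3) unfolding extreme_point_of_def by blast
  then obtain u where u: "a \<noteq> b" "0 < u" "u < 1" "x = (1 - u) *\<^sub>R a + u *\<^sub>R b"
    by (auto simp: in_segment)
  define m where "m = min u (1 - u)"
  have m: "0 < m" "m \<le> u" "m \<le> 1 - u"
    using u unfolding m_def by auto
  have "x - m *\<^sub>R (b - a) = (1 - (u - m)) *\<^sub>R a + (u - m) *\<^sub>R b"
       "x + m *\<^sub>R (b - a) = (1 - (u + m)) *\<^sub>R a + (u + m) *\<^sub>R b"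
    unfolding u(4) by (simp_all add: algebra_simps)
  then have "{x - m *\<^sub>R (b - a), x + m *\<^sub>R (b - a)} \<subseteq> S"
    using m convexD_alt[OF assms(1) ab(1,2)] by auto
  moreover have "m *\<^sub>R (b - a) \<noteq> 0"
    using m u by auto
  ultimately show thesis
    using that by blast
qed

lemma not_extreme_point_if_pm:
  assumes "{x - y, x + y} \<subseteq> S" "y \<noteq> 0"
  shows "\<not> x extreme_point_of S"
proof -
  have "x = midpoint (x - y) (x + y)"
    unfolding eq_commute[of x] midpoint_eq_iff by simp
  moreover have "x - y \<noteq> x + y"
    using assms(2) by (simp add: algebra_simps flip: scaleR_2)
  ultimately show ?thesis
    using assms(1) midpoint_in_open_segment[of "x - y" "x + y"] unfolding extreme_point_of_def
    by (metis insert_subset)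
qed

locale vector_norm =
  fixes N :: "'a::real_vector \<Rightarrow> real"
  assumes is_norm: "is_norm N"
begin

lemma scale: "N (c *\<^sub>R x) = \<bar>c\<bar> * N x"
  using is_norm unfolding is_norm_def by blast

lemma triangle: "N (x + y) \<le> N x + N y"
  using is_norm unfolding is_norm_def by blast

lemma zero [simp]: "N 0 = 0"
  using scale[of 0] by simp

lemma minus [simp]: "N (- x) = N x"
  using scale[of "-1" x] by simp

lemma nonneg: "0 \<le> N x"
  using triangle[of x "- x"] by simp

lemma convex_on_UNIV: "convex_on UNIV N"
proof (rule convex_onI)
  fix t :: real and x y assume "0 < t" "t < 1"
  then show "N ((1 - t) *\<^sub>R x + t *\<^sub>R y) \<le> (1 - t) * N x + t * N y"
    using triangle[of "(1 - t) *\<^sub>R x" "t *\<^sub>R y"] by (simp add: scale)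
qed simp

lemma convex_unit_ball: "convex (unit_ball N)"
proof (rule convexI)
  fix x y and u v :: real
  assume "x \<in> unit_ball N" "y \<in> unit_ball N" "0 \<le> u" "0 \<le> v" "u + v = 1"
  then have "N (u *\<^sub>R x + v *\<^sub>R y) \<le> u * N x + v * N y"
    using triangle[of "u *\<^sub>R x" "v *\<^sub>R y"] by (simp add: scale)
  also have "\<dots> \<le> u + v"
    using \<open>x \<in> unit_ball N\<close> \<open>y \<in> unit_ball N\<close> \<open>0 \<le> u\<close> \<open>0 \<le> v\<close>
    by (intro add_mono mult_left_le) (auto simp: unit_ball_def)
  finally show "u *\<^sub>R x + v *\<^sub>R y \<in> unit_ball N"
    using \<open>u + v = 1\<close> by (simp add: unit_ball_def)
qed

lemma uminus_in_unit_ball [simp]: "- x \<in> unit_ball N \<longleftrightarrow> x \<in> unit_ball N"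
  by (simp add: unit_ball_def)

lemma pm_in_unit_ball_uminus [simp]:
  "{- p - y, - p + y} \<subseteq> unit_ball N \<longleftrightarrow> {p - y, p + y} \<subseteq> unit_ball N"
proof -
  have "- p - y = - (p + y)" "- p + y = - (p - y)"
    by simp_all
  then show ?thesis
    by (simp only: insert_subset uminus_in_unit_ball) blast
qed

lemma add_scaleR_in_unit_ball:
  assumes "{p - y, p + y} \<subseteq> unit_ball N" "\<bar>t\<bar> \<le> 1"
  shows "p + t *\<^sub>R y \<in> unit_ball N"
proof -
  define a b where "a = (1 - t) / 2" and "b = (1 + t) / 2"
  have ab: "0 \<le> a" "0 \<le> b" "a + b = 1" "b - a = t"
    using assms(2) unfolding a_def b_def by (auto simp: field_simps)
  have "a *\<^sub>R (p - y) + b *\<^sub>R (p + y) = (a + b) *\<^sub>R p + (b - a) *\<^sub>R y"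
    by (simp add: algebra_simps)
  then have "p + t *\<^sub>R y = a *\<^sub>R (p - y) + b *\<^sub>R (p + y)"
    by (simp add: ab)
  then show ?thesis
    using assms(1) ab convexD[OF convex_unit_ball, of "p - y" "p + y" a b] by auto
qed

lemma pm_in_unit_ball_scaleR:
  assumes "{p - y, p + y} \<subseteq> unit_ball N" "\<bar>t\<bar> \<le> 1"
  shows "{p - t *\<^sub>R y, p + t *\<^sub>R y} \<subseteq> unit_ball N"
  using add_scaleR_in_unit_ball[OF assms(1), of t] add_scaleR_in_unit_ball[OF assms(1), of "- t"] assms(2)
  by simp

lemma pm_in_unit_ball_inside_segment:
  assumes "{w - z, w + z} \<subseteq> unit_ball N" "\<bar>k\<bar> \<le> 1"
  shows "{w + k *\<^sub>R z - (1 - \<bar>k\<bar>) *\<^sub>R z, w + k *\<^sub>R z + (1 - \<bar>k\<bar>) *\<^sub>R z} \<subseteq> unit_ball N"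
proof -
  have "\<bar>k - (1 - \<bar>k\<bar>)\<bar> \<le> 1" "\<bar>k + (1 - \<bar>k\<bar>)\<bar> \<le> 1"
    using assms(2) by linarith+
  then have "w + (k - (1 - \<bar>k\<bar>)) *\<^sub>R z \<in> unit_ball N" "w + (k + (1 - \<bar>k\<bar>)) *\<^sub>R z \<in> unit_ball N"
    using add_scaleR_in_unit_ball[OF assms(1)] by blast+
  then show ?thesis
    by (simp add: algebra_simps)
qed

definition movable :: "'a \<Rightarrow> 'a \<Rightarrow> bool" where
  "movable p y \<longleftrightarrow> N p < 1 \<or> {p - y, p + y} \<subseteq> unit_ball N"

lemma movable_uminus [simp]: "movable (- p) y \<longleftrightarrow> movable p y"
  unfolding movable_def by (simp only: minus pm_in_unit_ball_uminus)

lemma eventually_movable: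
  assumes "movable p y"
  shows "\<forall>\<^sub>F t in nhds 0. {p - t *\<^sub>R y, p + t *\<^sub>R y} \<subseteq> unit_ball N"
  using assms unfolding movable_def
proof
  assume "N p < 1"
  have "((\<lambda>t. N p + \<bar>t\<bar> * N y) \<longlongrightarrow> N p + \<bar>0\<bar> * N y) (nhds 0)"
    by (intro tendsto_intros filterlim_ident)
  then have "\<forall>\<^sub>F t in nhds 0. N p + \<bar>t\<bar> * N y < 1"
    using \<open>N p < 1\<close> by (simp add: order_tendsto_iff)
  then show ?thesis
  proof eventually_elim
    case (elim t)
    then show ?case
      using triangle[of p "- (t *\<^sub>R y)"] triangle[of p "t *\<^sub>R y"] by (simp add: unit_ball_def scale)
  qed
next
  assume pm: "{p - y, p + y} \<subseteq> unit_ball N"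
  have "\<forall>\<^sub>F t in nhds 0. \<bar>t\<bar> < (1::real)"
    unfolding eventually_nhds_metric dist_real_def by (intro exI[of _ 1]) auto
  then show ?thesis
    by eventually_elim (use pm_in_unit_ball_scaleR[OF pm] in auto)
qed

end

section \<open>Vertices of the cube\<close>

definition cube_vertices :: "(real^'n) set" where
  "cube_vertices = {v. \<forall>i. \<bar>v$i\<bar> = 1}"

lemma infnorm_le_iff:
  fixes x :: "real^'n"
  shows "infnorm x \<le> b \<longleftrightarrow> (\<forall>i. \<bar>x$i\<bar> \<le> b)"
  by (auto simp: infnorm_cart intro: order_trans[OF component_le_infnorm_cart] cSup_least)

lemma infnorm_less_iff:
  fixes x :: "real^'n"
  assumes "0 < b"
  shows "infnorm x < b \<longleftrightarrow> (\<forall>i. \<bar>x$i\<bar> < b)"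
proof -
  have "{\<bar>x$i\<bar> |i. i \<in> UNIV} = range (\<lambda>i. \<bar>x$i\<bar>)"
    by auto
  then have "infnorm x = Max (range (\<lambda>i. \<bar>x$i\<bar>))"
    by (simp add: infnorm_cart cSup_eq_Max)
  then show ?thesis
    by simp
qed

lemma unit_ball_infnorm_eq_cbox: "unit_ball infnorm = cbox (- 1) (1 :: real^'n)"
  by (auto simp: unit_ball_def infnorm_le_iff mem_box_cart abs_le_iff)

lemma uminus_cube_vertices [simp]: "- v \<in> cube_vertices \<longleftrightarrow> v \<in> cube_vertices"
  by (simp add: cube_vertices_def)

lemma infnorm_cube_vertex: "v \<in> cube_vertices \<Longrightarrow> infnorm v = 1"
  by (simp add: cube_vertices_def infnorm_cart)

lemma cube_vertex_component_neq_0: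
  assumes "v \<in> cube_vertices"
  shows "v$i \<noteq> 0"
proof -
  have "\<bar>v$i\<bar> = 1"
    using assms by (simp add: cube_vertices_def)
  then show ?thesis
    by auto
qed

lemma cube_vertex_neq_uminus:
  assumes "v \<in> cube_vertices"
  shows "- v \<noteq> v"
proof
  assume "- v = v"
  then have "(- v)$i = v$i" for i
    by (simp only:)
  then show False
    using cube_vertex_component_neq_0[OF assms] by simp
qed

lemma finite_cube_vertices: "finite (cube_vertices :: (real^'n) set)"
proof -
  have "finite (vec_nth -` (\<Pi>\<^sub>E i\<in>UNIV. {-1, 1 :: real}) :: (real^'n) set)"
    by (intro finite_vimageI finite_PiE) (auto intro: injI simp: vec_nth_inject)
  moreover have "(cube_vertices :: (real^'n) set) = vec_nth -` (\<Pi>\<^sub>E i\<in>UNIV. {-1, 1 :: real})"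
    by (auto simp: cube_vertices_def PiE_iff abs_eq_iff')
  ultimately show ?thesis
    by simp
qed

lemma abs_convex_combination_eq_1_imp_eq:
  fixes a b u :: real
  assumes "\<bar>a\<bar> \<le> 1" "\<bar>b\<bar> \<le> 1" "0 < u" "u < 1" "\<bar>(1 - u) * a + u * b\<bar> = 1"
  shows "a = b"
proof -
  have nonneg: "0 \<le> (1 - u) * (1 - a)" "0 \<le> u * (1 - b)" "0 \<le> (1 - u) * (1 + a)" "0 \<le> u * (1 + b)"
    using assms(1-4) by simp_all
  have eq: "(1 - u) * (1 - a) + u * (1 - b) = 1 - ((1 - u) * a + u * b)"
    "(1 - u) * (1 + a) + u * (1 + b) = 1 + ((1 - u) * a + u * b)"
    by (simp_all add: algebra_simps)
  from assms(5) consider "(1 - u) * a + u * b = 1" | "(1 - u) * a + u * b = -1"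
    by (auto simp: abs_eq_iff')
  then show ?thesis
  proof cases
    case 1
    then have "(1 - u) * (1 - a) + u * (1 - b) = 0"
      using eq(1) by simp
    then have "(1 - u) * (1 - a) = 0" "u * (1 - b) = 0"
      using nonneg(1,2) by (simp_all add: add_nonneg_eq_0_iff)
    then show ?thesis
      using assms(3,4) by simp
  next
    case 2
    then have "(1 - u) * (1 + a) + u * (1 + b) = 0"
      using eq(2) by simp
    then have "(1 - u) * (1 + a) = 0" "u * (1 + b) = 0"
      using nonneg(3,4) by (simp_all add: add_nonneg_eq_0_iff)
    then show ?thesis
      using assms(3,4) by simp
  qed
qed

lemma Ext_unit_ball_infnorm: "Ext (unit_ball infnorm) = (cube_vertices :: (real^'n) set)"
proof (intro set_eqI iffI)
  fix x :: "real^'n"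
  assume "x \<in> Ext (unit_ball infnorm)"
  then have ext: "x extreme_point_of unit_ball infnorm"
    by (simp add: Ext_def)
  then have x: "\<bar>x$i\<bar> \<le> 1" for i
    by (simp add: extreme_point_of_def unit_ball_def infnorm_le_iff)
  show "x \<in> cube_vertices"
    unfolding cube_vertices_def
  proof (intro CollectI allI, rule ccontr)
    fix i assume "\<bar>x$i\<bar> \<noteq> 1"
    define y where "y = (1 - \<bar>x$i\<bar>) *\<^sub>R axis i (1::real)"
    have "y \<noteq> 0"
      using \<open>\<bar>x$i\<bar> \<noteq> 1\<close> by (simp add: y_def axis_eq_0_iff)
    moreover have "{x - y, x + y} \<subseteq> unit_ball infnorm"
      using x by (auto simp: y_def unit_ball_def infnorm_le_iff axis_def abs_le_iff) (use x[of i] in arith)+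
    ultimately show False
      using ext not_extreme_point_if_pm by blast
  qed
next
  fix v :: "real^'n"
  assume v: "v \<in> cube_vertices"
  have "v \<notin> open_segment a b" if "a \<in> unit_ball infnorm" "b \<in> unit_ball infnorm" for a b
  proof
    assume "v \<in> open_segment a b"
    then obtain u where u: "a \<noteq> b" "0 < u" "u < 1" "v = (1 - u) *\<^sub>R a + u *\<^sub>R b"
      by (auto simp: in_segment)
    have "a$i = b$i" for i
      using that u(2,3) v u(4) abs_convex_combination_eq_1_imp_eq[of "a$i" "b$i" u]
      by (simp add: unit_ball_def infnorm_le_iff cube_vertices_def)
    then show False
      using u(1) by (simp add: vec_eq_iff)
  qed
  moreover have "v \<in> unit_ball infnorm"
    using v by (simp add: unit_ball_def infnorm_cube_vertex)
  ultimately show "v \<in> Ext (unit_ball infnorm)"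
    by (simp add: Ext_def extreme_point_of_def)
qed

lemma convex_on_le_on_unit_ball_infnorm:
  fixes f :: "real^'n \<Rightarrow> real"
  assumes "convex_on UNIV f" "\<forall>v\<in>cube_vertices. f v \<le> b" "infnorm x \<le> 1"
  shows "f x \<le> b"
proof -
  have "unit_ball infnorm = convex hull Ext (unit_ball (infnorm :: real^'n \<Rightarrow> real))"
    using Krein_Milman_Minkowski[of "unit_ball (infnorm :: real^'n \<Rightarrow> real)"]
    by (simp add: unit_ball_infnorm_eq_cbox Ext_def)
  then have "unit_ball infnorm = convex hull (cube_vertices :: (real^'n) set)"
    by (simp only: Ext_unit_ball_infnorm)
  then have "x \<in> convex hull cube_vertices"
    using assms(3) by (metis mem_Collect_eq unit_ball_def)
  then show ?thesis
    using convex_on_convex_hull_bound[OF convex_on_subset[OF assms(1)] assms(2)] by blast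
qed

section \<open>Antipodal pairs of vertices of the 3-cube\<close>

lemma vector_3_eq_iff [simp]:
  "(vector [a, b, c] :: real^3) = vector [a', b', c'] \<longleftrightarrow> a = a' \<and> b = b' \<and> c = c'"
  by (simp add: vec_eq_iff forall_3)

lemma uminus_vector_3 [simp]: "- (vector [a, b, c] :: real^3) = vector [- a, - b, - c]"
  by (simp add: vec_eq_iff forall_3)

lemma inner_vector_3: "w \<bullet> (vector [a, b, c] :: real^3) = w$1 * a + w$2 * b + w$3 * c"
  by (simp add: inner_vec_def sum_3 mult.commute)

definition cube_vertex_reps :: "(real^3) set" where
  "cube_vertex_reps = {vector [1, 1, 1], vector [1, 1, -1], vector [1, -1, 1], vector [-1, 1, 1]}"

lemma cube_vertices_3: "cube_vertices = cube_vertex_reps \<union> uminus ` cube_vertex_reps"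
proof (intro set_eqI iffI)
  fix v :: "real^3"
  assume "v \<in> cube_vertices"
  then have coords: "v$i = 1 \<or> v$i = -1" for i
    by (auto simp: cube_vertices_def abs_eq_iff')
  have "v = vector [v$1, v$2, v$3]"
    by (simp add: vec_eq_iff forall_3)
  then show "v \<in> cube_vertex_reps \<union> uminus ` cube_vertex_reps"
    using coords[of 1] coords[of 2] coords[of 3]
    by (auto simp: cube_vertex_reps_def)
next
  fix v :: "real^3"
  assume "v \<in> cube_vertex_reps \<union> uminus ` cube_vertex_reps"
  then show "v \<in> cube_vertices"
    by (auto simp: cube_vertex_reps_def cube_vertices_def forall_3)
qed

lemma cube_vertex_reps_disjoint: "cube_vertex_reps \<inter> uminus ` cube_vertex_reps = {}"
  by (simp add: cube_vertex_reps_def)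

lemma card_cube_vertex_reps_filter:
  "card {v \<in> cube_vertex_reps. P v} =
     of_bool (P (vector [1, 1, 1])) + of_bool (P (vector [1, 1, -1])) +
     of_bool (P (vector [1, -1, 1])) + of_bool (P (vector [-1, 1, 1]))"
proof -
  have "card {v \<in> cube_vertex_reps. P v} = (\<Sum>v\<in>cube_vertex_reps. of_bool (P v))"
    by (simp add: cube_vertex_reps_def Int_def conj_commute)
  then show ?thesis
    by (simp add: cube_vertex_reps_def)
qed

lemma cube_vertex_reps_orthogonal_imp_zero:
  assumes "3 \<le> card {v \<in> cube_vertex_reps. P v}" "\<forall>v\<in>cube_vertex_reps. P v \<longrightarrow> w \<bullet> v = 0"
  shows "w = 0"
proof -
  have "w$1 = 0 \<and> w$2 = 0 \<and> w$3 = 0"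
    using assms
    unfolding card_cube_vertex_reps_filter
    by (cases "P (vector [1, 1, 1])"; cases "P (vector [1, 1, -1])";
        cases "P (vector [1, -1, 1])"; cases "P (vector [-1, 1, 1])")
       (auto simp: cube_vertex_reps_def inner_vector_3)
  then show ?thesis
    by (simp add: vec_eq_iff forall_3)
qed

lemma card_symmetric_cube_vertices:
  assumes "\<And>v. P (- v) \<longleftrightarrow> P v"
  shows "card {v \<in> cube_vertices. P v} = 2 * card {v \<in> cube_vertex_reps. P v}"
proof -
  let ?S = "{v \<in> cube_vertex_reps. P v}"
  have "{v \<in> cube_vertices. P v} = ?S \<union> uminus ` ?S"
    using assms by (auto simp: cube_vertices_3)
  moreover have "?S \<inter> uminus ` ?S = {}"
    using cube_vertex_reps_disjoint by blast
  moreover have "finite ?S"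
    by (simp add: cube_vertex_reps_def)
  ultimately show ?thesis
    by (simp add: card_Un_disjoint card_image)
qed

lemma card_cube_vertices_3: "card (cube_vertices :: (real^3) set) = 8"
  using card_symmetric_cube_vertices[of "\<lambda>_. True"] card_cube_vertex_reps_filter[of "\<lambda>_. True"]
  by simp

lemma cube_vertices_normal_exists_iff:
  assumes "\<And>v. P (- v) \<longleftrightarrow> P v"
  shows "(\<exists>w. w \<noteq> 0 \<and> (\<forall>v\<in>cube_vertices. P v \<longrightarrow> w \<bullet> v = 0)) \<longleftrightarrow>
    card {v \<in> cube_vertex_reps. P v} \<le> 2"
proof
  assume "\<exists>w. w \<noteq> 0 \<and> (\<forall>v\<in>cube_vertices. P v \<longrightarrow> w \<bullet> v = 0)"
  then show "card {v \<in> cube_vertex_reps. P v} \<le> 2"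
    using cube_vertex_reps_orthogonal_imp_zero[of P] by (force simp: cube_vertices_3)
next
  let ?S = "{v \<in> cube_vertex_reps. P v}"
  assume "card ?S \<le> 2"
  moreover have "dim ?S \<le> card ?S"
    by (rule dim_le_card) (auto simp: span_base cube_vertex_reps_def)
  ultimately have "dim ?S < DIM(real^3)"
    by simp
  then obtain w :: "real^3" where w: "w \<noteq> 0" "\<And>v. v \<in> span ?S \<Longrightarrow> orthogonal w v"
    using orthogonal_to_subspace_exists by blast
  have "w \<bullet> v = 0" if "v \<in> cube_vertices" "P v" for v
  proof -
    have "v \<in> ?S \<or> - v \<in> ?S"
      using that assms[of v] by (auto simp: cube_vertices_3)
    then have "v \<in> span ?S"
      using span_base[of v ?S] span_neg[OF span_base, of "- v" ?S] by auto
    then show ?thesis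
      using w(2) by (simp add: orthogonal_def)
  qed
  then show "\<exists>w. w \<noteq> 0 \<and> (\<forall>v\<in>cube_vertices. P v \<longrightarrow> w \<bullet> v = 0)"
    using w(1) by blast
qed

lemma card_cube_vertices_ge_6_iff:
  fixes P :: "real^3 \<Rightarrow> bool"
  assumes "\<And>v. P (- v) \<longleftrightarrow> P v"
  shows "6 \<le> card {v \<in> cube_vertices. P v} \<longleftrightarrow>
    (\<forall>w. (\<forall>v\<in>cube_vertices. P v \<longrightarrow> w \<bullet> v = 0) \<longrightarrow> w = 0)"
  using card_symmetric_cube_vertices[of P, OF assms] cube_vertices_normal_exists_iff[of P, OF assms]
  by auto

lemma cube_vertices_normal_exists:
  fixes p q :: "real^3"
  assumes "\<And>v. P (- v) \<longleftrightarrow> P v"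
    and "p \<in> cube_vertices" "q \<in> cube_vertices" "q \<noteq> p" "q \<noteq> - p" "\<not> P p" "\<not> P q"
  obtains w where "w \<noteq> 0" "\<forall>v\<in>cube_vertices. P v \<longrightarrow> w \<bullet> v = 0"
proof -
  have "card {p, - p, q, - q} = 4"
    using assms(2-5) cube_vertex_neq_uminus[of p] cube_vertex_neq_uminus[of q]
    by (simp add: card_insert_if) (metis minus_equation_iff)
  then have "card (cube_vertices - {p, - p, q, - q}) = 4"
    using assms(2,3) by (simp add: card_Diff_subset card_cube_vertices_3)
  moreover have "card {v \<in> cube_vertices. P v} \<le> card (cube_vertices - {p, - p, q, - q})"
    using assms by (intro card_mono) (auto simp: finite_cube_vertices)
  ultimately have "card {v \<in> cube_vertices. P v} \<le> 4"
    by simp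
  then show thesis
    using that card_cube_vertices_ge_6_iff[of P, OF assms(1)] by fastforce
qed

section \<open>Contractions from the 3-cube to a normed plane\<close>

lemma matrix_vector_mult_uminus [simp]: "(A :: real^'n^'m) *v (- x) = - (A *v x)"
  using matrix_vector_mult_scaleR[of A "-1" x] by simp

lemma det2_eq_0_imp_parallel:
  fixes a b :: "real^2"
  assumes "a$1 * b$2 - a$2 * b$1 = 0" "a \<noteq> 0"
  obtains \<mu> where "b = \<mu> *\<^sub>R a"
proof -
  consider "a$1 \<noteq> 0" | "a$2 \<noteq> 0"
    using assms(2) by (auto simp: vec_eq_iff forall_2)
  then show thesis
  proof cases
    case 1
    then have "b = (b$1 / a$1) *\<^sub>R a"
      using assms(1) by (auto simp: vec_eq_iff forall_2 field_simps)
    then show thesis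
      by (rule that)
  next
    case 2
    then have "b = (b$2 / a$2) *\<^sub>R a"
      using assms(1) by (auto simp: vec_eq_iff forall_2 field_simps)
    then show thesis
      by (rule that)
  qed
qed

lemma matrix_2_3_cases:
  fixes T :: "real^3^2"
  obtains (kernel) l where "T *v l = 0" "\<forall>i. l$i \<noteq> 0"
  | (zero_column) k where "column k T = 0"
  | (parallel_columns) i j \<mu> where "i \<noteq> j" "column i T \<noteq> 0" "column j T = \<mu> *\<^sub>R column i T" "\<mu> \<noteq> 0"
proof -
  define d where "d a b = a$1 * b$2 - a$2 * b$1" for a b :: "real^2"
  have parallel: thesis if det: "d (column i T) (column j T) = 0" and "i \<noteq> j" for i j
  proof (cases "column i T = 0")
    case True
    then show thesis
      by (rule zero_column)
  next
    case False
    then obtain \<mu> where \<mu>: "column j T = \<mu> *\<^sub>R column i T"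
      using det2_eq_0_imp_parallel[OF det[unfolded d_def] False] by blast
    show thesis
    proof (cases "\<mu> = 0")
      case True
      then show thesis
        using \<mu> zero_column by simp
    next
      case False
      then show thesis
        using parallel_columns \<open>i \<noteq> j\<close> \<open>column i T \<noteq> 0\<close> \<mu> by blast
    qed
  qed
  \<comment> \<open>the cross product of the two rows of \<open>T\<close>\<close>
  define l :: "real^3" where
    "l = vector [d (column 2 T) (column 3 T), - d (column 1 T) (column 3 T), d (column 1 T) (column 2 T)]"
  have "T *v l = 0"
    by (simp add: matrix_mult_sum sum_3 l_def d_def vec_eq_iff forall_2 column_def algebra_simps)
  then show thesis
    using kernel parallel[of 1 2] parallel[of 1 3] parallel[of 2 3] by (force simp: l_def forall_3)
qed

locale plane_norm = vector_norm N for N :: "real^2 \<Rightarrow> real"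
begin

lemma convex_on_matrix_vector_mult: "convex_on UNIV (\<lambda>x. N (B *v x))"
proof (rule convex_onI)
  fix t :: real and x y assume "0 < t" "t < 1"
  then show "N (B *v ((1 - t) *\<^sub>R x + t *\<^sub>R y)) \<le> (1 - t) * N (B *v x) + t * N (B *v y)"
    using convex_onD[OF convex_on_UNIV, of t "B *v x" "B *v y"]
    by (simp add: matrix_vector_right_distrib matrix_vector_mult_scaleR)
qed simp

lemma op_norm_le_1_iff: "op_norm N B \<le> 1 \<longleftrightarrow> (\<forall>v\<in>cube_vertices. N (B *v v) \<le> 1)"
proof
  define K where "K = (\<Sum>v\<in>cube_vertices. N (B *v v))"
  have "\<forall>v\<in>cube_vertices. N (B *v v) \<le> K"
    unfolding K_def using finite_cube_vertices by (auto intro: member_le_sum nonneg)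
  then have "N (B *v x) \<le> K" if "infnorm x \<le> 1" for x
    using convex_on_le_on_unit_ball_infnorm[OF convex_on_matrix_vector_mult _ that] by blast
  then have bdd: "bdd_above {N (B *v x) |x. infnorm x \<le> 1}"
    by (intro bdd_aboveI[of _ K]) auto
  assume le: "op_norm N B \<le> 1"
  show "\<forall>v\<in>cube_vertices. N (B *v v) \<le> 1"
  proof
    fix v :: "real^3"
    assume "v \<in> cube_vertices"
    then have "N (B *v v) \<in> {N (B *v x) |x. infnorm x \<le> 1}"
      using infnorm_cube_vertex[of v] by fastforce
    then have "N (B *v v) \<le> op_norm N B"
      unfolding op_norm_def using bdd by (rule cSup_upper)
    then show "N (B *v v) \<le> 1"
      using le by linarith
  qed
next
  assume "\<forall>v\<in>cube_vertices. N (B *v v) \<le> 1"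
  then have "N (B *v x) \<le> 1" if "infnorm x \<le> 1" for x
    using convex_on_le_on_unit_ball_infnorm[OF convex_on_matrix_vector_mult _ that] by blast
  moreover have "infnorm (0 :: real^3) \<le> 1"
    by (simp add: infnorm_0)
  ultimately show "op_norm N B \<le> 1"
    unfolding op_norm_def by (auto intro!: cSup_least)
qed

lemma contraction_le_infnorm:
  assumes "op_norm N B \<le> 1"
  shows "N (B *v x) \<le> infnorm x"
proof (cases "x = 0")
  case False
  then have "infnorm x > 0"
    by (simp add: infnorm_pos_lt)
  moreover have "infnorm ((1 / infnorm x) *\<^sub>R x) \<le> 1"
    using \<open>infnorm x > 0\<close> by (simp add: infnorm_mul)
  then have "N (B *v ((1 / infnorm x) *\<^sub>R x)) \<le> 1"
    using assms convex_on_le_on_unit_ball_infnorm[OF convex_on_matrix_vector_mult]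
    by (simp add: op_norm_le_1_iff)
  ultimately show ?thesis
    by (simp add: matrix_vector_mult_scaleR scale field_simps)
qed (simp add: infnorm_0)

lemma not_extreme_contraction_if_rank_one_perturbation:
  assumes "op_norm N T \<le> 1" "y \<noteq> 0" "w \<noteq> 0"
    and "\<forall>v\<in>cube_vertices. w \<bullet> v = 0 \<or> movable (T *v v) y"
  shows "\<not> extreme_contraction N T"
proof -
  define D :: "real^3^2" where "D = (\<chi> i j. y$i * w$j)"
  have D: "D *v x = (w \<bullet> x) *\<^sub>R y" for x
    by (simp add: D_def vec_eq_iff matrix_vector_mult_def inner_vec_def sum_distrib_left mult_ac)
  let ?P = "\<lambda>t v. {T *v v - (t * (w \<bullet> v)) *\<^sub>R y, T *v v + (t * (w \<bullet> v)) *\<^sub>R y} \<subseteq> unit_ball N"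
  have "\<forall>\<^sub>F t in nhds 0. ?P t v" if v: "v \<in> cube_vertices" for v
  proof (cases "w \<bullet> v = 0")
    case True
    then show ?thesis
      using assms(1) v by (simp add: op_norm_le_1_iff unit_ball_def)
  next
    case False
    have "filterlim (\<lambda>t. t * (w \<bullet> v)) (nhds 0) (nhds 0)"
      by (auto intro!: tendsto_eq_intros filterlim_ident)
    moreover have "movable (T *v v) y"
      using assms(4) v False by blast
    ultimately show ?thesis
      using eventually_compose_filterlim[OF eventually_movable] by blast
  qed
  then have "\<forall>\<^sub>F t in nhds 0. \<forall>v\<in>cube_vertices. ?P t v"
    by (intro eventually_ball_finite finite_cube_vertices) auto
  then obtain d :: real where "d > 0" and d: "\<And>t. \<bar>t\<bar> < d \<Longrightarrow> \<forall>v\<in>cube_vertices. ?P t v"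
    by (auto simp: eventually_nhds_metric dist_real_def)
  define \<epsilon> where "\<epsilon> = d / 2"
  have "\<bar>\<epsilon>\<bar> < d" "\<epsilon> \<noteq> 0"
    using \<open>d > 0\<close> by (simp_all add: \<epsilon>_def)
  then have "{T - \<epsilon> *\<^sub>R D, T + \<epsilon> *\<^sub>R D} \<subseteq> {B. op_norm N B \<le> 1}"
    using d[of \<epsilon>] by (simp add: op_norm_le_1_iff unit_ball_def algebra_simps D
        flip: scaleR_matrix_vector_assoc)
  moreover have "\<epsilon> *\<^sub>R D \<noteq> 0"
  proof
    assume "\<epsilon> *\<^sub>R D = 0"
    then have "D *v w = 0"
      using \<open>\<epsilon> \<noteq> 0\<close> by simp
    then show False
      using assms(2,3) by (simp add: D)
  qed
  ultimately show ?thesis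
    unfolding extreme_contraction_def by (rule not_extreme_point_if_pm)
qed

lemma not_extreme_contraction_if_movable_pairs:
  assumes "op_norm N T \<le> 1" "y \<noteq> 0"
    and "p \<in> cube_vertices" "q \<in> cube_vertices" "q \<noteq> p" "q \<noteq> - p"
    and "movable (T *v p) y" "movable (T *v q) y"
  shows "\<not> extreme_contraction N T"
proof -
  obtain w where "w \<noteq> 0" "\<forall>v\<in>cube_vertices. \<not> movable (T *v v) y \<longrightarrow> w \<bullet> v = 0"
    using cube_vertices_normal_exists[of "\<lambda>v. \<not> movable (T *v v) y" p q] assms(3-8) by auto
  then show ?thesis
    using not_extreme_contraction_if_rank_one_perturbation[OF assms(1,2)] by blast
qed

lemma sign_vertex_not_norm_attaining:
  assumes "op_norm N T \<le> 1" "T *v l = 0" "\<forall>i. l$i \<noteq> 0"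
  shows "N (T *v (\<chi> i. sgn (l$i))) < 1"
proof -
  have "l \<noteq> 0"
    using assms(3) by (auto simp: vec_eq_iff)
  then have a: "infnorm l > 0"
    by (simp add: infnorm_pos_lt)
  define x where "x = (\<chi> i. sgn (l$i)) - (1 / infnorm l) *\<^sub>R l"
  have "\<bar>x$i\<bar> < 1" for i
  proof -
    have r: "0 < \<bar>l$i\<bar> / infnorm l" "\<bar>l$i\<bar> / infnorm l \<le> 1"
      using a assms(3) component_le_infnorm_cart[of l i] by auto
    have "x$i = sgn (l$i) * (1 - \<bar>l$i\<bar> / infnorm l)"
      by (simp add: x_def algebra_simps abs_mult_sgn)
    then show ?thesis
      using r assms(3) by (simp add: abs_mult abs_sgn_eq)
  qed
  then have "N (T *v x) < 1"
    using contraction_le_infnorm[OF assms(1), of x] infnorm_less_iff[of 1 x] by simp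
  moreover have "T *v x = T *v (\<chi> i. sgn (l$i))"
    using assms(2) by (simp add: x_def matrix_vector_mult_diff_distrib matrix_vector_mult_scaleR)
  ultimately show ?thesis
    by simp
qed

lemma not_extreme_contraction_if_zero_column:
  assumes "op_norm N T \<le> 1" "column k T = 0" "v \<in> cube_vertices" "y \<noteq> 0" "movable (T *v v) y"
  shows "\<not> extreme_contraction N T"
proof -
  define v' where "v' = v - (2 * v$k) *\<^sub>R axis k 1"
  have "T *v v' = T *v v"
    using assms(2) by (simp add: v'_def matrix_vector_mult_diff_distrib matrix_vector_mult_scaleR
        matrix_vector_mult_basis)
  moreover have "v' \<in> cube_vertices"
    using assms(3) by (auto simp: v'_def cube_vertices_def axis_def)
  moreover have "v' \<noteq> v"
    using cube_vertex_component_neq_0[OF assms(3), of k] by (auto simp: v'_def vec_eq_iff axis_def)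
  moreover have "v' \<noteq> - v"
  proof -
    obtain i :: 3 where "i \<noteq> k"
      by (cases "k = 1") (use that[of 2] that[of 1] in auto)
    then show ?thesis
      using cube_vertex_component_neq_0[OF assms(3), of i] by (auto simp: v'_def vec_eq_iff axis_def)
  qed
  ultimately show ?thesis
    using not_extreme_contraction_if_movable_pairs[OF assms(1,4,3), of v'] assms(5) by simp
qed

(* If u$j = - sgn \<mu> * u$i, then T u lies strictly inside the segment joining the images of the
   two vertices obtained from u by setting (u$i, u$j) to +-(1, sgn \<mu>). *)
lemma movable_if_parallel_columns:
  assumes "op_norm N T \<le> 1" "i \<noteq> j" "column j T = \<mu> *\<^sub>R column i T" "\<mu> \<noteq> 0"
    and u: "u \<in> cube_vertices" "u$j = - sgn \<mu> * u$i"
  shows "movable (T *v u) ((1 + \<bar>\<mu>\<bar> - \<bar>1 - \<bar>\<mu>\<bar>\<bar>) *\<^sub>R column i T)"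
proof -
  define c where "c = column i T"
  define M where "M = 1 + \<bar>\<mu>\<bar>"
  define z where "z = T *v u - (u$i * (1 - \<bar>\<mu>\<bar>)) *\<^sub>R c"
  define u' where "u' s = u + (s - u$i) *\<^sub>R axis i 1 + (s * sgn \<mu> - u$j) *\<^sub>R axis j 1" for s
  have "0 < M"
    by (simp add: M_def add_pos_nonneg)
  have T_u': "T *v u' s = z + s *\<^sub>R M *\<^sub>R c" for s
  proof -
    have "T *v u' s = T *v u + ((s - u$i) + (s * sgn \<mu> - u$j) * \<mu>) *\<^sub>R c"
      using assms(3) by (simp add: u'_def c_def matrix_vector_right_distrib matrix_vector_mult_scaleR
          matrix_vector_mult_basis scaleR_add_left)
    also have "(s - u$i) + (s * sgn \<mu> - u$j) * \<mu> = s * M - u$i * (1 - \<bar>\<mu>\<bar>)"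
      unfolding M_def u(2) by (simp add: algebra_simps abs_sgn)
    finally show ?thesis
      by (simp add: z_def algebra_simps)
  qed
  have "N (z + s *\<^sub>R M *\<^sub>R c) \<le> 1" if "\<bar>s\<bar> = 1" for s
  proof -
    have "u' s \<in> cube_vertices"
      using u(1) that assms(2,4) by (auto simp: u'_def cube_vertices_def axis_def abs_mult)
    then have "N (T *v u' s) \<le> 1"
      using assms(1) unfolding op_norm_le_1_iff by blast
    then show ?thesis
      by (simp add: T_u')
  qed
  from this[of 1] this[of "-1"] have "{z - M *\<^sub>R c, z + M *\<^sub>R c} \<subseteq> unit_ball N"
    by (simp add: unit_ball_def)
  from pm_in_unit_ball_inside_segment[OF this, of "u$i * (1 - \<bar>\<mu>\<bar>) / M"]
  have "movable (z + (u$i * (1 - \<bar>\<mu>\<bar>) / M) *\<^sub>R M *\<^sub>R c) ((1 - \<bar>1 - \<bar>\<mu>\<bar>\<bar> / M) *\<^sub>R M *\<^sub>R c)"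
    using u(1) \<open>0 < M\<close> by (simp add: movable_def cube_vertices_def abs_mult M_def)
  moreover have "z + (u$i * (1 - \<bar>\<mu>\<bar>) / M) *\<^sub>R M *\<^sub>R c = T *v u"
    using \<open>0 < M\<close> by (simp add: z_def)
  moreover have "(1 - \<bar>1 - \<bar>\<mu>\<bar>\<bar> / M) * M = 1 + \<bar>\<mu>\<bar> - \<bar>1 - \<bar>\<mu>\<bar>\<bar>"
    using \<open>0 < M\<close> by (simp add: M_def field_simps)
  ultimately show ?thesis
    by (simp add: c_def)
qed

lemma not_extreme_contraction_if_parallel_columns:
  assumes "op_norm N T \<le> 1" "i \<noteq> j" "column i T \<noteq> 0" "column j T = \<mu> *\<^sub>R column i T" "\<mu> \<noteq> 0"
  shows "\<not> extreme_contraction N T"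
proof -
  let ?y = "(1 + \<bar>\<mu>\<bar> - \<bar>1 - \<bar>\<mu>\<bar>\<bar>) *\<^sub>R column i T"
  let ?w = "axis i 1 - sgn \<mu> *\<^sub>R axis j 1 :: real^3"
  have "?w \<bullet> u = 0 \<or> movable (T *v u) ?y" if "u \<in> cube_vertices" for u
  proof -
    have "\<bar>u$j\<bar> = \<bar>sgn \<mu> * u$i\<bar>"
      using that assms(5) by (simp add: cube_vertices_def abs_mult abs_sgn_eq)
    then consider "u$j = sgn \<mu> * u$i" | "u$j = - sgn \<mu> * u$i"
      by (auto simp: abs_eq_iff)
    then show ?thesis
    proof cases
      case 1
      then have "?w \<bullet> u = 0"
        using assms(5) by (simp add: inner_diff_left inner_axis')
      then show ?thesis ..
    next
      case 2
      then show ?thesis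
        using movable_if_parallel_columns[OF assms(1,2,4,5) that] by blast
    qed
  qed
  moreover have "?w \<noteq> 0"
    using assms(2) by (auto simp: vec_eq_iff axis_def)
  moreover have "?y \<noteq> 0"
    using assms(3,5) by auto
  ultimately show ?thesis
    using not_extreme_contraction_if_rank_one_perturbation[OF assms(1)] by blast
qed

lemma extreme_contraction_if_attaining_vertices:
  assumes "op_norm N T \<le> 1"
    and span: "\<forall>w. (\<forall>v\<in>cube_vertices. N (T *v v) = 1 \<longrightarrow> w \<bullet> v = 0) \<longrightarrow> w = 0"
    and ext: "\<forall>v\<in>cube_vertices. N (T *v v) = 1 \<longrightarrow> T *v v extreme_point_of unit_ball N"
  shows "extreme_contraction N T"
  unfolding extreme_contraction_def extreme_point_of_def
proof (intro conjI ballI)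
  show "T \<in> {B. op_norm N B \<le> 1}"
    using assms(1) by simp
  fix A B
  assume A: "A \<in> {B. op_norm N B \<le> 1}" and B: "B \<in> {B. op_norm N B \<le> 1}"
  show "T \<notin> open_segment A B"
  proof
    assume "T \<in> open_segment A B"
    then obtain u where u: "A \<noteq> B" "0 < u" "u < 1" "T = (1 - u) *\<^sub>R A + u *\<^sub>R B"
      by (auto simp: in_segment)
    have "A *v v = B *v v" if v: "v \<in> cube_vertices" "N (T *v v) = 1" for v
    proof (rule ccontr)
      assume "A *v v \<noteq> B *v v"
      then have "T *v v \<in> open_segment (A *v v) (B *v v)"
        using u by (auto simp: in_segment matrix_vector_mult_add_rdistrib scaleR_matrix_vector_assoc)
      moreover have "A *v v \<in> unit_ball N" "B *v v \<in> unit_ball N"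
        using A B v(1) by (auto simp: op_norm_le_1_iff unit_ball_def)
      ultimately show False
        using ext v by (auto simp: extreme_point_of_def)
    qed
    then have "A$r = B$r" for r
      using span[rule_format, of "A$r - B$r"]
      by (simp add: inner_diff_left flip: matrix_vector_mul_component)
    then show False
      using u(1) by (simp add: vec_eq_iff)
  qed
qed

lemma extreme_contraction_imp_attaining_vertices_span:
  assumes "extreme_contraction N T"
  shows "\<forall>w. (\<forall>v\<in>cube_vertices. N (T *v v) = 1 \<longrightarrow> w \<bullet> v = 0) \<longrightarrow> w = 0"
proof (intro allI impI, rule ccontr)
  fix w
  assume w: "\<forall>v\<in>cube_vertices. N (T *v v) = 1 \<longrightarrow> w \<bullet> v = 0" "w \<noteq> 0"
  have T: "op_norm N T \<le> 1"
    using assms by (simp add: extreme_contraction_def extreme_point_of_def)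
  then have "\<forall>v\<in>cube_vertices. w \<bullet> v = 0 \<or> movable (T *v v) (axis 1 1)"
    using w(1) by (force simp: op_norm_le_1_iff movable_def)
  then have "\<not> extreme_contraction N T"
    using not_extreme_contraction_if_rank_one_perturbation[of T "axis 1 1" w] T w(2) by simp
  then show False
    using assms by blast
qed

lemma not_extreme_contraction_if_all_vertices_attaining:
  assumes "op_norm N T \<le> 1" "\<forall>u\<in>cube_vertices. N (T *v u) = 1"
    and "v \<in> cube_vertices" "y \<noteq> 0" "movable (T *v v) y"
  shows "\<not> extreme_contraction N T"
  using matrix_2_3_cases[of T]
proof cases
  case (kernel l)
  have "(\<chi> i. sgn (l$i)) \<in> cube_vertices"
    using kernel(2) by (simp add: cube_vertices_def)
  then show ?thesis
    using assms(2) sign_vertex_not_norm_attaining[OF assms(1) kernel] by auto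
next
  case (zero_column k)
  then show ?thesis
    using not_extreme_contraction_if_zero_column[OF assms(1) _ assms(3-5)] by blast
next
  case (parallel_columns i j \<mu>)
  then show ?thesis
    using not_extreme_contraction_if_parallel_columns[OF assms(1)] by blast
qed

lemma extreme_contraction_imp_extreme_image:
  assumes "extreme_contraction N T" "v \<in> cube_vertices" "N (T *v v) = 1"
  shows "T *v v extreme_point_of unit_ball N"
proof (rule ccontr)
  assume "\<not> T *v v extreme_point_of unit_ball N"
  moreover have "T *v v \<in> unit_ball N"
    using assms(3) by (simp add: unit_ball_def)
  ultimately obtain y where "y \<noteq> 0" "{T *v v - y, T *v v + y} \<subseteq> unit_ball N"
    using not_extreme_point_imp_pm[OF convex_unit_ball] by blast
  then have y: "y \<noteq> 0" "movable (T *v v) y"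
    by (simp_all add: movable_def)
  have T: "op_norm N T \<le> 1"
    using assms(1) by (simp add: extreme_contraction_def extreme_point_of_def)
  show False
  proof (cases "\<forall>u\<in>cube_vertices. N (T *v u) = 1")
    case True
    then show False
      using not_extreme_contraction_if_all_vertices_attaining[OF T True assms(2) y] assms(1) by blast
  next
    case False
    then obtain u where u: "u \<in> cube_vertices" "N (T *v u) < 1"
      using T by (force simp: op_norm_le_1_iff)
    then have "u \<noteq> v" "u \<noteq> - v"
      using assms(3) by auto
    with u show False
      using not_extreme_contraction_if_movable_pairs[OF T y(1) assms(2) u(1)] y(2) assms(1)
      by (simp add: movable_def)
  qed
qed

end

theorem theorem3p11:
  fixes N :: "real^2 \<Rightarrow> real" and T :: "real^3^2"
  assumes "is_norm N"
    and "polygonal N"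
    and "op_norm N T = 1"
  shows "extreme_contraction N T \<longleftrightarrow>
           (card (norm_attaining N T \<inter> Ext (unit_ball infnorm)) \<ge> 6 \<and>
            (\<lambda>x. T *v x) ` (norm_attaining N T \<inter> Ext (unit_ball infnorm))
              \<subseteq> Ext (unit_ball N))"
proof -
  interpret plane_norm N
    by unfold_locales (rule assms(1))
  let ?M = "{v \<in> cube_vertices. N (T *v v) = 1}"
  have M: "norm_attaining N T \<inter> Ext (unit_ball infnorm) = ?M"
    using assms(3) by (auto simp: norm_attaining_def Ext_unit_ball_infnorm infnorm_cube_vertex)
  have card: "6 \<le> card ?M \<longleftrightarrow> (\<forall>w. (\<forall>v\<in>cube_vertices. N (T *v v) = 1 \<longrightarrow> w \<bullet> v = 0) \<longrightarrow> w = 0)"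
    by (rule card_cube_vertices_ge_6_iff) simp
  have image: "(\<lambda>x. T *v x) ` ?M \<subseteq> Ext (unit_ball N) \<longleftrightarrow>
      (\<forall>v\<in>cube_vertices. N (T *v v) = 1 \<longrightarrow> T *v v extreme_point_of unit_ball N)"
    by (auto simp: Ext_def)
  show ?thesis
    unfolding M card image
  proof (intro iffI conjI)
    assume "extreme_contraction N T"
    then show "\<forall>w. (\<forall>v\<in>cube_vertices. N (T *v v) = 1 \<longrightarrow> w \<bullet> v = 0) \<longrightarrow> w = 0"
      and "\<forall>v\<in>cube_vertices. N (T *v v) = 1 \<longrightarrow> T *v v extreme_point_of unit_ball N"
      by (simp_all add: extreme_contraction_imp_attaining_vertices_span extreme_contraction_imp_extreme_image)
  qed (use assms(3) extreme_contraction_if_attaining_vertices in auto)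
qed

end
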